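(* Let $\Gamma_0$ be a normal system with entropy $S$, and let $\Gamma$ be a further state space such that $\prec$ is defined on $\Gamma$, on $\Gamma\times\Gamma_0$ and on multiple products of these spaces, satisfying (A1), (A2), (A3), (A6) and the cancellation law (comparability (B2) is NOT assumed). Fix reference states $Z_0\in\Gamma_0$, $X_1\in\Gamma$ and assume (B1): for every $X\in\Gamma$ there exist $Z',Z''\in\Gamma_0$ with $(X_1,Z')\prec(X,Z_0)\prec(X_1,Z'')$. For $X\in\Gamma$ define $$S_-(X)=\sup\{S(Z')\,:\,Z'\in\Gamma_0,\ (X_1,Z')\prec(X,Z_0)\},\qquad S_+(X)=\inf\{S(Z'')\,:\,Z''\in\Gamma_0,\ (X,Z_0)\prec(X_1,Z'')\}.$$ Then: (1) For $X,Y\in\Gamma$, $X\prec Y$ implies $S_-(X)\le S_-(Y)$ and $S_+(X)\le S_+(Y)$. (2) For $X,Y\in\Gamma$, if $S_+(X)\le S_-(Y)$ then $X\prec Y$. (3) Define $S_\pm$ on $\Gamma\times\Gamma$ analogously, using $\Gamma_0\times\Gamma_0$ (with entropy $S(Z,W)=S(Z)+S(W)$) as entropy meter and $(X_1,X_1)\in\Gamma\times\Gamma$, $(Z_0,Z_0)\in\Gamma_0\times\Gamma_0$ as reference points, i.e. $S_-(X,Y)=\sup\{S(Z')+S(W')\,:\,(X_1,X_1,Z',W')\prec(X,Y,Z_0,Z_0)\}$ and $S_+(X,Y)=\inf\{S(Z'')+S(W'')\,:\,(X,Y,Z_0,Z_0)\prec(X_1,X_1,Z'',W'')\}$. Then for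 all $X,Y\in\Gamma$, $$S_-(X)+S_-(Y)\le S_-(X,Y)\le S_+(X,Y)\le S_+(X)+S_+(Y).$$ (4) Define $S_\pm$ on $\Gamma\times\Gamma_0$ analogously, using $\Gamma_0$ as entropy meter and $(X_1,Z_0)\in\Gamma\times\Gamma_0$, $Z_0\in\Gamma_0$ as reference points, i.e. $S_-(X,Z)=\sup\{S(Z')\,:\,(X_1,Z_0,Z')\prec(X,Z,Z_0)\}$ and $S_+(X,Z)=\inf\{S(Z'')\,:\,(X,Z,Z_0)\prec(X_1,Z_0,Z'')\}$. Then $S_\pm(X,Z_0)=S_\pm(X)$ for $X\in\Gamma$ and $S_\pm(X_1,Z)=S(Z)$ for $Z\in\Gamma_0$. Moreover, if $\hat S$ is any function on $\Gamma\times\Gamma_0$ that is monotone with respect to $\prec$ (i.e. $A\prec B$ implies $\hat S(A)\le\hat S(B)$) and satisfies $\hat S(X_1,Z)=S(Z)$ for all $Z\in\Gamma_0$, then $S_-(X)\le\hat S(X,Z_0)\le S_+(X)$ for all $X\in\Gamma$.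
   Context: Setting (axiomatic thermodynamics via adiabatic accessibility). States belong to state spaces; for states $X,Y$ (possibly in different spaces) $X\prec Y$ means $Y$ can be reached from $X$ by an adiabatic process; $X\sim_A Y$ means $X\prec Y$ and $Y\prec X$. For state spaces $\Gamma_1,\Gamma_2$ the product $\Gamma_1\times\Gamma_2$ consists of pairs $(X_1,X_2)$; multiple products are formed likewise, and $(X,Y,Z,W)$ denotes a state of a fourfold product. For a scalable space, $\lambda X$ ($\lambda>0$) denotes a scaled state. Assumptions on $\prec$: (A1) Reflexivity: $X\sim_A X$. (A2) Transitivity: $X\prec Y$, $Y\prec Z$ imply $X\prec Z$. (A3) Consistency: $X\prec X'$ and $Y\prec Y'$ imply $(X,Y)\prec(X',Y')$. (A6) Stability with respect to $\Gamma_0$: if $(X,\varepsilon Z_0)\prec(Y,\varepsilon Z_1)$ with $Z_0,Z_1\in\Gamma_0$ for a sequence of $\varepsilon>0$ tending to zero, then $X\prec Y$. Cancellation law: $(X_1,X_2)\prec(X_1,Y_2)$ implies $X_2\prec Y_2$. A normal system $\Gamma_0$ is a state space of equilibrium states on which scaling is defined, equipped with an additive and extensive entropy function $S:\Gamma_0\to\mathbb R$ ($S(\lambda Z)=\lambda S(Z)$, $S$ additive on products of scaled copies) which characterizes $\prec$: for two states in the same product of scaled copies of $\Gamma_0$, one precedes the other iff its entropy is $\le$ that of the other; moreover the range of $S$ is connected (if $S(X)<S(Y)$, every value in $[S(X),S(Y)]$ is attained by $S$ on $\Gamma_0$). Scaling is not assumed to be defined on $\Gamma$. *)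

theory Defs
  imports Complex_Main "HOL-Library.Multiset"
begin

text \<open>An atom is either a state of the system Gamma (type 'g)
  or a scaled copy l Z of a state Z of the normal system Gamma0 (type 'z, l > 0).
  A compound state (a state of a product of these spaces) is a finite nonempty
  multiset of atoms; multisets encode the standard identification of products up
  to reordering and rebracketing.\<close>

datatype ('g, 'z) atom = G 'g | N real 'z

type_synonym ('g, 'z) state = "('g, 'z) atom multiset"

datatype space_label = Gamma_sp | Scaled_sp real

fun atom_space :: "('g, 'z) atom \<Rightarrow> space_label" where
  "atom_space (G g) = Gamma_sp"
| "atom_space (N l z) = Scaled_sp l"

definition space :: "('g, 'z) state \<Rightarrow> space_label multiset" where
  "space A = image_mset atom_space A"

definition valid_state :: "('g, 'z) state \<Rightarrow> bool" where
  "valid_state A \<longleftrightarrow> A \<noteq> {#} \<and> (\<forall>a\<in>#A. case a of G g \<Rightarrow> True | N l z \<Rightarrow> l > 0)"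

definition pure0 :: "('g, 'z) state \<Rightarrow> bool" where
  "pure0 A \<longleftrightarrow> (\<forall>a\<in>#A. \<exists>l z. a = N l z)"

definition ent0 :: "('z \<Rightarrow> real) \<Rightarrow> ('g, 'z) state \<Rightarrow> real" where
  "ent0 S A = (\<Sum>a\<in>#A. case a of G g \<Rightarrow> 0 | N l z \<Rightarrow> l * S z)"

definition A1 :: "(('g,'z) state \<Rightarrow> ('g,'z) state \<Rightarrow> bool) \<Rightarrow> bool" where
  "A1 prec \<longleftrightarrow> (\<forall>X. valid_state X \<longrightarrow> prec X X)"

definition A2 :: "(('g,'z) state \<Rightarrow> ('g,'z) state \<Rightarrow> bool) \<Rightarrow> bool" where
  "A2 prec \<longleftrightarrow> (\<forall>X Y Z. valid_state X \<and> valid_state Y \<and> valid_state Z \<and>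
      prec X Y \<and> prec Y Z \<longrightarrow> prec X Z)"

definition A3 :: "(('g,'z) state \<Rightarrow> ('g,'z) state \<Rightarrow> bool) \<Rightarrow> bool" where
  "A3 prec \<longleftrightarrow> (\<forall>X X' Y Y'. valid_state X \<and> valid_state X' \<and> valid_state Y \<and> valid_state Y' \<and>
      prec X X' \<and> prec Y Y' \<longrightarrow> prec (X + Y) (X' + Y'))"

definition A6 :: "(('g,'z) state \<Rightarrow> ('g,'z) state \<Rightarrow> bool) \<Rightarrow> bool" where
  "A6 prec \<longleftrightarrow> (\<forall>X Y Z0 Z1. valid_state X \<and> valid_state Y \<and>
      (\<forall>\<delta>>0. \<exists>\<epsilon>. 0 < \<epsilon> \<and> \<epsilon> < \<delta> \<and> prec (X + {#N \<epsilon> Z0#}) (Y + {#N \<epsilon> Z1#}))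
      \<longrightarrow> prec X Y)"

definition cancellation :: "(('g,'z) state \<Rightarrow> ('g,'z) state \<Rightarrow> bool) \<Rightarrow> bool" where
  "cancellation prec \<longleftrightarrow> (\<forall>X1 X2 Y2. valid_state X1 \<and> valid_state X2 \<and> valid_state Y2 \<and>
      prec (X1 + X2) (X1 + Y2) \<longrightarrow> prec X2 Y2)"

definition normal_system :: "(('g,'z) state \<Rightarrow> ('g,'z) state \<Rightarrow> bool) \<Rightarrow> ('z \<Rightarrow> real) \<Rightarrow> bool" where
  "normal_system prec S \<longleftrightarrow>
     (\<forall>A B. valid_state A \<and> valid_state B \<and> pure0 A \<and> pure0 B \<and> space A = space B \<longrightarrow>
        (prec A B \<longleftrightarrow> ent0 S A \<le> ent0 S B)) \<and>
     (\<forall>X Y t. S X < S Y \<and> S X \<le> t \<and> t \<le> S Y \<longrightarrow> (\<exists>Z. S Z = t))"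

definition Sminus where
  "Sminus prec S X1 Z0 X = Sup {S Z' | Z'. prec {#G X1, N 1 Z'#} {#G X, N 1 Z0#}}"
definition Splus where
  "Splus prec S X1 Z0 X = Inf {S Z'' | Z''. prec {#G X, N 1 Z0#} {#G X1, N 1 Z''#}}"

definition Sminus2 where
  "Sminus2 prec S X1 Z0 X Y = Sup {S Z' + S W' | Z' W'.
      prec {#G X1, G X1, N 1 Z', N 1 W'#} {#G X, G Y, N 1 Z0, N 1 Z0#}}"
definition Splus2 where
  "Splus2 prec S X1 Z0 X Y = Inf {S Z'' + S W'' | Z'' W''.
      prec {#G X, G Y, N 1 Z0, N 1 Z0#} {#G X1, G X1, N 1 Z'', N 1 W''#}}"

definition SminusC where
  "SminusC prec S X1 Z0 X Z = Sup {S Z' | Z'. prec {#G X1, N 1 Z0, N 1 Z'#} {#G X, N 1 Z, N 1 Z0#}}"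
definition SplusC where
  "SplusC prec S X1 Z0 X Z = Inf {S Z'' | Z''. prec {#G X, N 1 Z, N 1 Z0#} {#G X1, N 1 Z0, N 1 Z''#}}"

end

theory Submission
  imports Defs
begin

text \<open>Everything except (2) follows from consistency, transitivity and cancellation, which
  let one add, chain and remove reference systems in the defining sets of \<open>S\<^sub>\<plusminus>\<close>.
  For (2), if \<open>S\<^sub>+(X) \<le> S\<^sub>-(Y)\<close> then a witness \<open>Z''\<close> for X and a witness \<open>Z'\<close> for Y can be
  chosen with \<open>S(Z'')\<close> exceeding \<open>S(Z')\<close> by an arbitrarily small amount. Any fixed pair of
  witnesses \<open>W\<^sub>1\<close>, \<open>W\<^sub>0\<close> gives a scaled process \<open>\<epsilon>W\<^sub>0 \<prec> \<epsilon>W\<^sub>1\<close> in \<open>\<Gamma>\<^sub>0\<close> paying for that defect, so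
  \<open>(X, Z\<^sub>0, \<epsilon>W\<^sub>0) \<prec> (Y, Z\<^sub>0, \<epsilon>W\<^sub>1)\<close> for all small \<open>\<epsilon>\<close>; stability (A6) and cancellation then
  give \<open>X \<prec> Y\<close>.\<close>

lemma valid_state_add_mset_G [simp]:
  "valid_state (add_mset (G g) A) \<longleftrightarrow> A = {#} \<or> valid_state A"
  by (auto simp: valid_state_def)

lemma valid_state_add_mset_N [simp]:
  "valid_state (add_mset (N l z) A) \<longleftrightarrow> 0 < l \<and> (A = {#} \<or> valid_state A)"
  by (auto simp: valid_state_def)

lemma cSup_add_le:
  fixes A B C :: "'a::{conditionally_complete_linorder, ordered_ab_group_add} set"
  assumes "A \<noteq> {}" "B \<noteq> {}" "bdd_above C" "\<And>a b. a \<in> A \<Longrightarrow> b \<in> B \<Longrightarrow> a + b \<in> C"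
  shows "Sup A + Sup B \<le> Sup C"
proof -
  have "Sup B \<le> Sup C - a" if "a \<in> A" for a
  proof (rule cSup_least)
    show "b \<le> Sup C - a" if "b \<in> B" for b
      using cSup_upper[OF assms(4) assms(3)] \<open>a \<in> A\<close> that by (simp add: le_diff_eq add.commute)
  qed (fact assms(2))
  then have "Sup A \<le> Sup C - Sup B"
    using assms(1) by (intro cSup_least) (auto simp: le_diff_eq add.commute)
  then show ?thesis
    by (simp add: le_diff_eq)
qed

lemma cInf_add_ge:
  fixes A B C :: "'a::{conditionally_complete_linorder, ordered_ab_group_add} set"
  assumes "A \<noteq> {}" "B \<noteq> {}" "bdd_below C" "\<And>a b. a \<in> A \<Longrightarrow> b \<in> B \<Longrightarrow> a + b \<in> C"
  shows "Inf C \<le> Inf A + Inf B"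
proof -
  have "Inf C - a \<le> Inf B" if "a \<in> A" for a
  proof (rule cInf_greatest)
    show "Inf C - a \<le> b" if "b \<in> B" for b
      using cInf_lower[OF assms(4) assms(3)] \<open>a \<in> A\<close> that by (simp add: diff_le_eq add.commute)
  qed (fact assms(2))
  then have "Inf C - Inf B \<le> Inf A"
    using assms(1) by (intro cInf_greatest) (auto simp: diff_le_eq add.commute)
  then show ?thesis
    by (simp add: diff_le_eq)
qed

locale adiabatic_accessibility =
  fixes prec :: "('g, 'z) state \<Rightarrow> ('g, 'z) state \<Rightarrow> bool" (infix "\<prec>" 50)
    and S :: "'z \<Rightarrow> real"
  assumes normal: "normal_system prec S"
    and reflexivity: "A1 prec" and transitivity: "A2 prec" and consistency: "A3 prec"
    and cancellation_law: "cancellation prec"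
begin

lemma prec_refl: "valid_state A \<Longrightarrow> A \<prec> A"
  using reflexivity by (simp add: A1_def)

lemma prec_trans:
  "\<lbrakk>A \<prec> B; B \<prec> C; valid_state A; valid_state B; valid_state C\<rbrakk> \<Longrightarrow> A \<prec> C"
  using transitivity unfolding A2_def by blast

lemma prec_add:
  "\<lbrakk>A \<prec> A'; B \<prec> B'; valid_state A; valid_state A'; valid_state B; valid_state B'\<rbrakk>
    \<Longrightarrow> A + B \<prec> A' + B'"
  using consistency unfolding A3_def by blast

lemma prec_add_left_iff:
  "\<lbrakk>valid_state C; valid_state A; valid_state B\<rbrakk> \<Longrightarrow> C + A \<prec> C + B \<longleftrightarrow> A \<prec> B"
  using cancellation_law prec_add[OF prec_refl] unfolding cancellation_def by blast

lemma prec_pure_iff: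
  "\<lbrakk>valid_state A; valid_state B; pure0 A; pure0 B; space A = space B\<rbrakk>
    \<Longrightarrow> A \<prec> B \<longleftrightarrow> ent0 S A \<le> ent0 S B"
  using normal unfolding normal_system_def by blast

lemma prec_scaled_iff: "0 < l \<Longrightarrow> {#N l a#} \<prec> {#N l b#} \<longleftrightarrow> S a \<le> S b"
  by (subst prec_pure_iff) (simp_all add: space_def pure0_def ent0_def)

lemma prec_scaled_pair_iff:
  "\<lbrakk>0 < l; 0 < m\<rbrakk> \<Longrightarrow>
    {#N l a, N m b#} \<prec> {#N l c, N m d#} \<longleftrightarrow> l * S a + m * S b \<le> l * S c + m * S d"
  by (subst prec_pure_iff) (simp_all add: space_def pure0_def ent0_def)

lemma SminusC_at_reference:
  "SminusC prec S X1 Z0 X Z0 = Sminus prec S X1 Z0 X"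
proof -
  have "{#G X1, N 1 Z0, N 1 Z'#} \<prec> {#G X, N 1 Z0, N 1 Z0#} \<longleftrightarrow> {#G X1, N 1 Z'#} \<prec> {#G X, N 1 Z0#}"
    for Z'
    using prec_add_left_iff[of "{#N 1 Z0#}" "{#G X1, N 1 Z'#}" "{#G X, N 1 Z0#}"]
    by (simp add: add_mset_commute)
  then show ?thesis
    by (simp add: SminusC_def Sminus_def)
qed

lemma SplusC_at_reference:
  "SplusC prec S X1 Z0 X Z0 = Splus prec S X1 Z0 X"
proof -
  have "{#G X, N 1 Z0, N 1 Z0#} \<prec> {#G X1, N 1 Z0, N 1 Z''#} \<longleftrightarrow> {#G X, N 1 Z0#} \<prec> {#G X1, N 1 Z''#}"
    for Z''
    using prec_add_left_iff[of "{#N 1 Z0#}" "{#G X, N 1 Z0#}" "{#G X1, N 1 Z''#}"]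
    by (simp add: add_mset_commute)
  then show ?thesis
    by (simp add: SplusC_def Splus_def)
qed

lemma SminusC_reference_system: "SminusC prec S X1 Z0 X1 Z = S Z"
proof -
  have "{#G X1, N 1 Z0, N 1 Z'#} \<prec> {#G X1, N 1 Z, N 1 Z0#} \<longleftrightarrow> S Z' \<le> S Z" for Z'
    using prec_add_left_iff[of "{#G X1, N 1 Z0#}" "{#N 1 Z'#}" "{#N 1 Z#}"]
    by (simp add: add_mset_commute prec_scaled_iff)
  moreover have "Sup {S Z' | Z'. S Z' \<le> S Z} = S Z"
    by (rule cSup_eq_maximum) auto
  ultimately show ?thesis
    by (simp add: SminusC_def)
qed

lemma SplusC_reference_system: "SplusC prec S X1 Z0 X1 Z = S Z"
proof -
  have "{#G X1, N 1 Z, N 1 Z0#} \<prec> {#G X1, N 1 Z0, N 1 Z''#} \<longleftrightarrow> S Z \<le> S Z''" for Z''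
    using prec_add_left_iff[of "{#G X1, N 1 Z0#}" "{#N 1 Z#}" "{#N 1 Z''#}"]
    by (simp add: add_mset_commute prec_scaled_iff)
  moreover have "Inf {S Z'' | Z''. S Z \<le> S Z''} = S Z"
    by (rule cInf_eq_minimum) auto
  ultimately show ?thesis
    by (simp add: SplusC_def)
qed

end

locale entropy_meter = adiabatic_accessibility +
  fixes X1 :: 'g and Z0 :: 'z
  assumes B1: "\<forall>X. \<exists>Z' Z''. {#G X1, N 1 Z'#} \<prec> {#G X, N 1 Z0#} \<and> {#G X, N 1 Z0#} \<prec> {#G X1, N 1 Z''#}"
begin

definition lower_entropies :: "'g \<Rightarrow> real set" where
  "lower_entropies X = {S Z' | Z'. {#G X1, N 1 Z'#} \<prec> {#G X, N 1 Z0#}}"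

definition upper_entropies :: "'g \<Rightarrow> real set" where
  "upper_entropies X = {S Z'' | Z''. {#G X, N 1 Z0#} \<prec> {#G X1, N 1 Z''#}}"

lemma Sminus_eq_Sup: "Sminus prec S X1 Z0 X = Sup (lower_entropies X)"
  by (simp add: Sminus_def lower_entropies_def)

lemma Splus_eq_Inf: "Splus prec S X1 Z0 X = Inf (upper_entropies X)"
  by (simp add: Splus_def upper_entropies_def)

lemma lower_entropies_nonempty: "lower_entropies X \<noteq> {}"
  using B1 by (auto simp: lower_entropies_def)

lemma upper_entropies_nonempty: "upper_entropies X \<noteq> {}"
  using B1 by (auto simp: upper_entropies_def)

lemma lower_le_upper_entropy:
  assumes "a \<in> lower_entropies X" "b \<in> upper_entropies X"
  shows "a \<le> b"
proof -
  obtain Z' Z'' where "a = S Z'" "b = S Z''"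
    and "{#G X1, N 1 Z'#} \<prec> {#G X, N 1 Z0#}" "{#G X, N 1 Z0#} \<prec> {#G X1, N 1 Z''#}"
    using assms by (auto simp: lower_entropies_def upper_entropies_def)
  then have "{#G X1, N 1 Z'#} \<prec> {#G X1, N 1 Z''#}"
    using prec_trans by force
  then show ?thesis
    using \<open>a = S Z'\<close> \<open>b = S Z''\<close> prec_add_left_iff[of "{#G X1#}" "{#N 1 Z'#}" "{#N 1 Z''#}"]
    by (simp add: add_mset_commute prec_scaled_iff)
qed

lemma bdd_above_lower_entropies: "bdd_above (lower_entropies X)"
  using lower_le_upper_entropy upper_entropies_nonempty unfolding bdd_above_def by blast

lemma bdd_below_upper_entropies: "bdd_below (upper_entropies X)"
  using lower_le_upper_entropy lower_entropies_nonempty unfolding bdd_below_def by blast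

lemma Sminus_Splus_mono:
  assumes "{#G X#} \<prec> {#G Y#}"
  shows "Sminus prec S X1 Z0 X \<le> Sminus prec S X1 Z0 Y \<and> Splus prec S X1 Z0 X \<le> Splus prec S X1 Z0 Y"
proof -
  have XY: "{#G X, N 1 Z0#} \<prec> {#G Y, N 1 Z0#}"
    using prec_add[OF assms prec_refl, of "{#N 1 Z0#}"] by (simp add: add_mset_commute)
  have "lower_entropies X \<subseteq> lower_entropies Y"
    using prec_trans[OF _ XY] by (auto simp: lower_entropies_def)
  moreover have "upper_entropies Y \<subseteq> upper_entropies X"
    using prec_trans[OF XY] by (auto simp: upper_entropies_def)
  ultimately show ?thesis
    by (simp add: Sminus_eq_Sup Splus_eq_Inf lower_entropies_nonempty upper_entropies_nonempty
        bdd_above_lower_entropies bdd_below_upper_entropies cSup_subset_mono cInf_superset_mono)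
qed

lemma near_reference_witnesses:
  assumes "Splus prec S X1 Z0 X \<le> Sminus prec S X1 Z0 Y" "0 < \<eta>"
  obtains Z'' Z' where "{#G X, N 1 Z0#} \<prec> {#G X1, N 1 Z''#}" "{#G X1, N 1 Z'#} \<prec> {#G Y, N 1 Z0#}"
    "S Z'' < S Z' + \<eta>"
proof -
  have "Inf (upper_entropies X) < Splus prec S X1 Z0 X + \<eta> / 2"
    using \<open>0 < \<eta>\<close> by (simp add: Splus_eq_Inf)
  then obtain b where b: "b \<in> upper_entropies X" "b < Splus prec S X1 Z0 X + \<eta> / 2"
    using cInf_less_iff[OF upper_entropies_nonempty bdd_below_upper_entropies] by blast
  have "Sminus prec S X1 Z0 Y - \<eta> / 2 < Sup (lower_entropies Y)"
    using \<open>0 < \<eta>\<close> by (simp add: Sminus_eq_Sup)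
  then obtain a where a: "a \<in> lower_entropies Y" "Sminus prec S X1 Z0 Y - \<eta> / 2 < a"
    using less_cSup_iff[OF lower_entropies_nonempty bdd_above_lower_entropies] by blast
  have "b < a + \<eta>"
    using a b assms(1) by linarith
  then show thesis
    using a(1) b(1) that by (auto simp: lower_entropies_def upper_entropies_def)
qed

text \<open>If \<open>S(W\<^sub>1) \<le> S(W\<^sub>0)\<close> the witnesses \<open>W\<^sub>1, W\<^sub>0\<close> themselves balance (this uses \<open>\<epsilon> \<le> 1\<close>);
  otherwise the witnesses are taken within the gap \<open>\<epsilon> (S(W\<^sub>1) - S(W\<^sub>0))\<close>.\<close>
lemma gap_bridged_by_scaled_copy:
  assumes XY: "Splus prec S X1 Z0 X \<le> Sminus prec S X1 Z0 Y"
    and W1: "{#G X, N 1 Z0#} \<prec> {#G X1, N 1 W1#}" and W0: "{#G X1, N 1 W0#} \<prec> {#G Y, N 1 Z0#}"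
    and "0 < \<epsilon>" "\<epsilon> \<le> 1"
  shows "{#G X, N 1 Z0#} + {#N \<epsilon> W0#} \<prec> {#G Y, N 1 Z0#} + {#N \<epsilon> W1#}"
proof -
  obtain Z'' Z' where Z'': "{#G X, N 1 Z0#} \<prec> {#G X1, N 1 Z''#}"
    and Z': "{#G X1, N 1 Z'#} \<prec> {#G Y, N 1 Z0#}"
    and balance: "1 * S Z'' + \<epsilon> * S W0 \<le> 1 * S Z' + \<epsilon> * S W1"
  proof (cases "S W1 \<le> S W0")
    case True
    have "(1 - \<epsilon>) * S W1 \<le> (1 - \<epsilon>) * S W0"
      using True \<open>\<epsilon> \<le> 1\<close> by (intro mult_left_mono) auto
    then show thesis
      using that[OF W1 W0] by (simp add: algebra_simps)
  next
    case False
    then have "0 < \<epsilon> * (S W1 - S W0)"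
      using \<open>0 < \<epsilon>\<close> by simp
    with XY obtain Z'' Z' where "{#G X, N 1 Z0#} \<prec> {#G X1, N 1 Z''#}" "{#G X1, N 1 Z'#} \<prec> {#G Y, N 1 Z0#}"
      "S Z'' < S Z' + \<epsilon> * (S W1 - S W0)"
      by (rule near_reference_witnesses)
    then show thesis
      using that by (simp add: algebra_simps)
  qed
  let ?M = "{#G X1, N 1 Z'', N \<epsilon> W0#}" and ?M' = "{#G X1, N 1 Z', N \<epsilon> W1#}"
  have s1: "{#G X, N 1 Z0#} + {#N \<epsilon> W0#} \<prec> ?M"
    using prec_add[OF Z'' prec_refl[of "{#N \<epsilon> W0#}"]] \<open>0 < \<epsilon>\<close> by (simp add: add_mset_commute)
  have "{#G X1#} + {#N 1 Z'', N \<epsilon> W0#} \<prec> {#G X1#} + {#N 1 Z', N \<epsilon> W1#}"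
    using prec_add_left_iff[of "{#G X1#}" "{#N 1 Z'', N \<epsilon> W0#}" "{#N 1 Z', N \<epsilon> W1#}"]
      prec_scaled_pair_iff[of 1 \<epsilon>] balance \<open>0 < \<epsilon>\<close> by simp
  then have s2: "?M \<prec> ?M'"
    by (simp add: add_mset_commute)
  have s3: "?M' \<prec> {#G Y, N 1 Z0#} + {#N \<epsilon> W1#}"
    using prec_add[OF Z' prec_refl[of "{#N \<epsilon> W1#}"]] \<open>0 < \<epsilon>\<close> by (simp add: add_mset_commute)
  show ?thesis
    using prec_trans[OF prec_trans[OF s1 s2] s3] \<open>0 < \<epsilon>\<close> by simp
qed

lemma prec_if_Splus_le_Sminus:
  assumes "A6 prec" and XY: "Splus prec S X1 Z0 X \<le> Sminus prec S X1 Z0 Y"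
  shows "{#G X#} \<prec> {#G Y#}"
proof -
  obtain W1 where W1: "{#G X, N 1 Z0#} \<prec> {#G X1, N 1 W1#}"
    using B1 by blast
  obtain W0 where W0: "{#G X1, N 1 W0#} \<prec> {#G Y, N 1 Z0#}"
    using B1 by blast
  have bridging: "\<exists>\<epsilon>. 0 < \<epsilon> \<and> \<epsilon> < \<delta> \<and> {#G X, N 1 Z0#} + {#N \<epsilon> W0#} \<prec> {#G Y, N 1 Z0#} + {#N \<epsilon> W1#}"
    if "0 < \<delta>" for \<delta>
  proof (intro exI conjI)
    show "0 < min (\<delta> / 2) 1" "min (\<delta> / 2) 1 < \<delta>"
      using that by auto
    then show "{#G X, N 1 Z0#} + {#N (min (\<delta> / 2) 1) W0#} \<prec> {#G Y, N 1 Z0#} + {#N (min (\<delta> / 2) 1) W1#}"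
      by (intro gap_bridged_by_scaled_copy[OF XY W1 W0]) auto
  qed
  have "{#G X, N 1 Z0#} \<prec> {#G Y, N 1 Z0#}"
    using \<open>A6 prec\<close> bridging unfolding A6_def
    by (elim allE[of _ "{#G X, N 1 Z0#}"] allE[of _ "{#G Y, N 1 Z0#}"] allE[of _ W0] allE[of _ W1]) simp
  then show ?thesis
    using prec_add_left_iff[of "{#N 1 Z0#}" "{#G X#}" "{#G Y#}"] by (simp add: add_mset_commute)
qed

lemma Sminus_le_monotone:
  assumes "\<And>X Z Y W. {#G X, N 1 Z#} \<prec> {#G Y, N 1 W#} \<Longrightarrow> Shat X Z \<le> Shat Y W"
    and "\<And>Z. Shat X1 Z = S Z"
  shows "Sminus prec S X1 Z0 X \<le> Shat X Z0"
  using assms lower_entropies_nonempty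
  by (force simp: Sminus_eq_Sup lower_entropies_def intro: cSup_least)

lemma monotone_le_Splus:
  assumes "\<And>X Z Y W. {#G X, N 1 Z#} \<prec> {#G Y, N 1 W#} \<Longrightarrow> Shat X Z \<le> Shat Y W"
    and "\<And>Z. Shat X1 Z = S Z"
  shows "Shat X Z0 \<le> Splus prec S X1 Z0 X"
  using assms upper_entropies_nonempty
  by (force simp: Splus_eq_Inf upper_entropies_def intro: cInf_greatest)

definition lower_entropies2 :: "'g \<Rightarrow> 'g \<Rightarrow> real set" where
  "lower_entropies2 X Y = {S Z' + S W' | Z' W'.
      {#G X1, G X1, N 1 Z', N 1 W'#} \<prec> {#G X, G Y, N 1 Z0, N 1 Z0#}}"

definition upper_entropies2 :: "'g \<Rightarrow> 'g \<Rightarrow> real set" where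
  "upper_entropies2 X Y = {S Z'' + S W'' | Z'' W''.
      {#G X, G Y, N 1 Z0, N 1 Z0#} \<prec> {#G X1, G X1, N 1 Z'', N 1 W''#}}"

lemma add_mem_lower_entropies2:
  "\<lbrakk>a \<in> lower_entropies X; b \<in> lower_entropies Y\<rbrakk> \<Longrightarrow> a + b \<in> lower_entropies2 X Y"
  unfolding lower_entropies_def lower_entropies2_def
  using prec_add by (fastforce simp: add_mset_commute)

lemma add_mem_upper_entropies2:
  "\<lbrakk>a \<in> upper_entropies X; b \<in> upper_entropies Y\<rbrakk> \<Longrightarrow> a + b \<in> upper_entropies2 X Y"
  unfolding upper_entropies_def upper_entropies2_def
  using prec_add by (fastforce simp: add_mset_commute)

lemma lower_le_upper_entropy2:
  assumes "a \<in> lower_entropies2 X Y" "b \<in> upper_entropies2 X Y"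
  shows "a \<le> b"
proof -
  obtain Z' W' Z'' W'' where "a = S Z' + S W'" "b = S Z'' + S W''"
    and "{#G X1, G X1, N 1 Z', N 1 W'#} \<prec> {#G X, G Y, N 1 Z0, N 1 Z0#}"
      "{#G X, G Y, N 1 Z0, N 1 Z0#} \<prec> {#G X1, G X1, N 1 Z'', N 1 W''#}"
    using assms by (auto simp: lower_entropies2_def upper_entropies2_def)
  then have "{#G X1, G X1, N 1 Z', N 1 W'#} \<prec> {#G X1, G X1, N 1 Z'', N 1 W''#}"
    using prec_trans by force
  then show ?thesis
    using \<open>a = S Z' + S W'\<close> \<open>b = S Z'' + S W''\<close>
      prec_add_left_iff[of "{#G X1, G X1#}" "{#N 1 Z', N 1 W'#}" "{#N 1 Z'', N 1 W''#}"]
      prec_scaled_pair_iff[of 1 1]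
    by (simp add: add_mset_commute)
qed

lemma Sminus2_bounds:
  "Sminus prec S X1 Z0 X + Sminus prec S X1 Z0 Y \<le> Sminus2 prec S X1 Z0 X Y
   \<and> Sminus2 prec S X1 Z0 X Y \<le> Splus2 prec S X1 Z0 X Y
   \<and> Splus2 prec S X1 Z0 X Y \<le> Splus prec S X1 Z0 X + Splus prec S X1 Z0 Y"
proof -
  have lower_nonempty: "lower_entropies2 X Y \<noteq> {}"
    using add_mem_lower_entropies2 lower_entropies_nonempty by blast
  have upper_nonempty: "upper_entropies2 X Y \<noteq> {}"
    using add_mem_upper_entropies2 upper_entropies_nonempty by blast
  have "bdd_above (lower_entropies2 X Y)" "bdd_below (upper_entropies2 X Y)"
    using lower_le_upper_entropy2 lower_nonempty upper_nonempty
    unfolding bdd_above_def bdd_below_def by blast+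
  moreover have "Sup (lower_entropies2 X Y) \<le> Inf (upper_entropies2 X Y)"
    using lower_le_upper_entropy2 by (intro cSup_least[OF lower_nonempty] cInf_greatest[OF upper_nonempty])
  moreover have "Sminus2 prec S X1 Z0 X Y = Sup (lower_entropies2 X Y)"
    "Splus2 prec S X1 Z0 X Y = Inf (upper_entropies2 X Y)"
    by (simp_all add: Sminus2_def Splus2_def lower_entropies2_def upper_entropies2_def)
  ultimately show ?thesis
    using cSup_add_le[OF lower_entropies_nonempty lower_entropies_nonempty _ add_mem_lower_entropies2]
      cInf_add_ge[OF upper_entropies_nonempty upper_entropies_nonempty _ add_mem_upper_entropies2]
    by (simp add: Sminus_eq_Sup Splus_eq_Inf)
qed

end

theorem proposition1:
  fixes prec :: "('g, 'z) state \<Rightarrow> ('g, 'z) state \<Rightarrow> bool"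
    and S :: "'z \<Rightarrow> real" and X1 :: 'g and Z0 :: 'z
  assumes "normal_system prec S"
    and "A1 prec" and "A2 prec" and "A3 prec" and "A6 prec" and "cancellation prec"
    and B1: "\<forall>X. \<exists>Z' Z''. prec {#G X1, N 1 Z'#} {#G X, N 1 Z0#} \<and>
                          prec {#G X, N 1 Z0#} {#G X1, N 1 Z''#}"
  shows "(\<forall>X Y. prec {#G X#} {#G Y#} \<longrightarrow>
            Sminus prec S X1 Z0 X \<le> Sminus prec S X1 Z0 Y \<and>
            Splus prec S X1 Z0 X \<le> Splus prec S X1 Z0 Y)
       \<and> (\<forall>X Y. Splus prec S X1 Z0 X \<le> Sminus prec S X1 Z0 Y \<longrightarrow> prec {#G X#} {#G Y#})
       \<and> (\<forall>X Y. Sminus prec S X1 Z0 X + Sminus prec S X1 Z0 Y \<le> Sminus2 prec S X1 Z0 X Y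
              \<and> Sminus2 prec S X1 Z0 X Y \<le> Splus2 prec S X1 Z0 X Y
              \<and> Splus2 prec S X1 Z0 X Y \<le> Splus prec S X1 Z0 X + Splus prec S X1 Z0 Y)
       \<and> (\<forall>X. SminusC prec S X1 Z0 X Z0 = Sminus prec S X1 Z0 X
              \<and> SplusC prec S X1 Z0 X Z0 = Splus prec S X1 Z0 X)
       \<and> (\<forall>Z. SminusC prec S X1 Z0 X1 Z = S Z \<and> SplusC prec S X1 Z0 X1 Z = S Z)
       \<and> (\<forall>Shat :: 'g \<Rightarrow> 'z \<Rightarrow> real.
            (\<forall>X Z Y W. prec {#G X, N 1 Z#} {#G Y, N 1 W#} \<longrightarrow> Shat X Z \<le> Shat Y W)
            \<and> (\<forall>Z. Shat X1 Z = S Z)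
            \<longrightarrow> (\<forall>X. Sminus prec S X1 Z0 X \<le> Shat X Z0 \<and> Shat X Z0 \<le> Splus prec S X1 Z0 X))"
proof -
  interpret entropy_meter prec S X1 Z0
    using assms by unfold_locales
  show ?thesis
    by (simp add: Sminus_Splus_mono prec_if_Splus_le_Sminus[OF \<open>A6 prec\<close>] Sminus2_bounds
        SminusC_at_reference SplusC_at_reference SminusC_reference_system SplusC_reference_system)
      (blast intro: Sminus_le_monotone monotone_le_Splus)
qed

end
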